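(* The Iterated Relaxation Procedure (described in the context) returns a set $M'\in\mathcal I$ such that for every $v\in V$, $$\sum_{e\in\delta_{M'}(v)\setminus L(v)}d_{v,e}\le b_v,$$ where $\delta_{M'}(v)=\delta(v)\cap M'$ and $L(v)$ denotes a set of $\min\{k,|\delta_{M'}(v)|\}$ edges $e\in\delta_{M'}(v)$ with greatest demand $d_{v,e}$.
   Context: Setting: a hypergraph $G=(V,E)$ with every hyperedge having at most $k$ endpoints, capacities $b_v\ge0$, demands $d_{v,e}\ge0$ for each hyperedge $e$ and endpoint $v\in e$, profits $p_e\ge0$, and a matroid $\mathcal M=(E,\mathcal I)$ given by an independence oracle; $\delta(v)$ is the set of hyperedges containing $v$. For $W\subseteq V$, $F\subseteq E$, a matroid $\mathcal M'$ on ground set $F$ with rank function $r_{\mathcal M'}$, and values $b'_v$ ($v\in W$), let $LP[W,F,\mathcal M',b']$ be $\max\{\sum_{e\in F}p_ex_e: \sum_{e\in\delta_F(v)}d_{v,e}x_e\le b'_v\ \forall v\in W,\ x(A)\le r_{\mathcal M'}(A)\ \forall A\subseteq F,\ x\ge0\}$, where $\delta_F(v)=\delta(v)\cap F$ and $x(A)=\sum_{e\in A}x_e$. $\mathcal M'-e$ denotes deletion and $\mathcal M'/e$ contraction. Iterated Relaxation Procedure: start with $W=V$, $F=E$, $\mathcal M'=\mathcal M$, $b'_v=b_v$, $M'=\emptyset$. While $F\neq\emptyset$: compute an optimal extreme point $x^*$ of $LP[W,F,\mathcal M',b']$; if $x^*_e=0$ for some $e\in F$, set $F\leftarrow F-\{e\}$,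 $\mathcal M'\leftarrow\mathcal M'-e$; else if $x^*_e=1$ for some $e\in F$, set $F\leftarrow F-\{e\}$, $\mathcal M'\leftarrow\mathcal M'/e$, $M'\leftarrow M'\cup\{e\}$ and $b'_v\leftarrow b'_v-d_{v,e}$ for each endpoint $v$ of $e$; otherwise remove from $W$ a vertex $v\in W$ minimizing $|\delta_F(v)|-x^*(\delta_F(v))$. Return $M'$. *)

theory Defs
  imports Complex_Main
begin

definition matroid :: "'e set \<Rightarrow> ('e set \<Rightarrow> bool) \<Rightarrow> bool" where
  "matroid G indep \<longleftrightarrow>
     finite G \<and>
     (\<forall>I. indep I \<longrightarrow> I \<subseteq> G) \<and>
     indep {} \<and>
     (\<forall>I J. indep J \<and> I \<subseteq> J \<longrightarrow> indep I) \<and>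
     (\<forall>I J. indep I \<and> indep J \<and> card I < card J \<longrightarrow> (\<exists>e\<in>J - I. indep (insert e I)))"

definition mrank :: "('e set \<Rightarrow> bool) \<Rightarrow> 'e set \<Rightarrow> nat" where
  "mrank indep A = Max (card ` {I. I \<subseteq> A \<and> indep I})"

definition mdel :: "('e set \<Rightarrow> bool) \<Rightarrow> 'e \<Rightarrow> ('e set \<Rightarrow> bool)" where
  "mdel indep e = (\<lambda>I. indep I \<and> e \<notin> I)"

definition mcontr :: "('e set \<Rightarrow> bool) \<Rightarrow> 'e \<Rightarrow> ('e set \<Rightarrow> bool)" where
  "mcontr indep e = (\<lambda>I. e \<notin> I \<and> (if indep {e} then indep (insert e I) else indep I))"

definition hdelta :: "('e \<Rightarrow> 'v set) \<Rightarrow> 'e set \<Rightarrow> 'v \<Rightarrow> 'e set" where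
  "hdelta ends F v = {e \<in> F. v \<in> ends e}"

text \<open>Points are functions on the edge type that vanish outside F (i.e. vectors in R^F).\<close>
definition lp_feasible ::
  "('e \<Rightarrow> 'v set) \<Rightarrow> ('v \<Rightarrow> 'e \<Rightarrow> real) \<Rightarrow> 'v set \<Rightarrow> 'e set \<Rightarrow> ('e set \<Rightarrow> bool)
   \<Rightarrow> ('v \<Rightarrow> real) \<Rightarrow> ('e \<Rightarrow> real) \<Rightarrow> bool" where
  "lp_feasible ends d W F indep b' x \<longleftrightarrow>
     (\<forall>e. e \<notin> F \<longrightarrow> x e = 0) \<and>
     (\<forall>e\<in>F. 0 \<le> x e) \<and>
     (\<forall>v\<in>W. (\<Sum>e\<in>hdelta ends F v. d v e * x e) \<le> b' v) \<and>
     (\<forall>A. A \<subseteq> F \<longrightarrow> sum x A \<le> real (mrank indep A))"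

definition lp_extreme ::
  "('e \<Rightarrow> 'v set) \<Rightarrow> ('v \<Rightarrow> 'e \<Rightarrow> real) \<Rightarrow> 'v set \<Rightarrow> 'e set \<Rightarrow> ('e set \<Rightarrow> bool)
   \<Rightarrow> ('v \<Rightarrow> real) \<Rightarrow> ('e \<Rightarrow> real) \<Rightarrow> bool" where
  "lp_extreme ends d W F indep b' x \<longleftrightarrow>
     lp_feasible ends d W F indep b' x \<and>
     \<not> (\<exists>y z t. lp_feasible ends d W F indep b' y \<and> lp_feasible ends d W F indep b' z \<and>
              y \<noteq> z \<and> 0 < t \<and> t < 1 \<and> x = (\<lambda>e. t * y e + (1 - t) * z e))"

definition lp_opt_extreme ::
  "('e \<Rightarrow> 'v set) \<Rightarrow> ('v \<Rightarrow> 'e \<Rightarrow> real) \<Rightarrow> ('e \<Rightarrow> real) \<Rightarrow> 'v set \<Rightarrow> 'e set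
   \<Rightarrow> ('e set \<Rightarrow> bool) \<Rightarrow> ('v \<Rightarrow> real) \<Rightarrow> ('e \<Rightarrow> real) \<Rightarrow> bool" where
  "lp_opt_extreme ends d p W F indep b' x \<longleftrightarrow>
     lp_extreme ends d W F indep b' x \<and>
     (\<forall>y. lp_feasible ends d W F indep b' y \<longrightarrow>
          (\<Sum>e\<in>F. p e * y e) \<le> (\<Sum>e\<in>F. p e * x e))"

text \<open>State: (W, F, M' (independence predicate), b', current solution set M').\<close>
type_synonym ('v, 'e) irp_state =
  "'v set \<times> 'e set \<times> ('e set \<Rightarrow> bool) \<times> ('v \<Rightarrow> real) \<times> 'e set"

text \<open>One iteration of the while loop (nondeterministic in the choice of the optimal
  extreme point, the edge and the minimizing vertex).\<close>
definition irp_step ::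
  "('e \<Rightarrow> 'v set) \<Rightarrow> ('v \<Rightarrow> 'e \<Rightarrow> real) \<Rightarrow> ('e \<Rightarrow> real)
   \<Rightarrow> ('v, 'e) irp_state \<Rightarrow> ('v, 'e) irp_state \<Rightarrow> bool" where
  "irp_step ends d p s s' \<longleftrightarrow>
    (case s of (W, F, indep, b', M) \<Rightarrow>
      F \<noteq> {} \<and>
      (\<exists>x. lp_opt_extreme ends d p W F indep b' x \<and>
        ((\<exists>e\<in>F. x e = 0 \<and> s' = (W, F - {e}, mdel indep e, b', M))
         \<or> ((\<forall>e\<in>F. x e \<noteq> 0) \<and>
            (\<exists>e\<in>F. x e = 1 \<and>
               s' = (W, F - {e}, mcontr indep e,
                     (\<lambda>v. if v \<in> ends e then b' v - d v e else b' v), insert e M)))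
         \<or> ((\<forall>e\<in>F. x e \<noteq> 0 \<and> x e \<noteq> 1) \<and>
            (\<exists>v\<in>W. (\<forall>u\<in>W. real (card (hdelta ends F v)) - sum x (hdelta ends F v)
                              \<le> real (card (hdelta ends F u)) - sum x (hdelta ends F u)) \<and>
                    s' = (W - {v}, F, indep, b', M))))))"

end

theory Submission
  imports Defs
begin

text \<open>An edge fixed at value 1 still fits the residual capacity of its endpoints, so a vertex that
  stays in W never exceeds its capacity. A vertex is dropped from W only when its slack
  \<open>|\<delta>\<^sub>F(v)| - x(\<delta>\<^sub>F(v))\<close> is at most k; the part of its load not covered by the LP then lies on
  fractional edges of total deficit \<open>1 - x e\<close> at most k, which the k heaviest edges absorb,
  whichever of these edges are chosen later. Such a vertex exists at every fractional extreme point: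
  otherwise a maximal chain of tight rank constraints together with the degree constraints of W
  would be fewer than the edges, leaving a nonzero direction along which x could be perturbed.\<close>

context
  fixes G :: "'e set" and ind :: "'e set \<Rightarrow> bool"
  assumes mat: "matroid G ind"
begin

lemma matroid_finite_ground: "finite G"
  using mat by (simp add: matroid_def)

lemma matroid_indep_subset: "ind I \<Longrightarrow> I \<subseteq> G"
  using mat by (simp add: matroid_def)

lemma matroid_indep_empty: "ind {}"
  using mat by (simp add: matroid_def)

lemma matroid_indep_mono: "ind J \<Longrightarrow> I \<subseteq> J \<Longrightarrow> ind I"
  using mat unfolding matroid_def by blast

lemma matroid_augment: "ind I \<Longrightarrow> ind J \<Longrightarrow> card I < card J \<Longrightarrow> \<exists>e\<in>J - I. ind (insert e I)"
  using mat unfolding matroid_def by blast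

lemma matroid_indep_finite: "ind I \<Longrightarrow> finite I"
  using matroid_indep_subset matroid_finite_ground finite_subset by blast

lemma finite_indep_subsets: "finite {I. I \<subseteq> A \<and> ind I}"
  using matroid_indep_subset matroid_finite_ground
  by (blast intro: finite_subset[of _ "Pow G"])

lemma card_le_mrank: "I \<subseteq> A \<Longrightarrow> ind I \<Longrightarrow> card I \<le> mrank ind A"
  unfolding mrank_def using finite_indep_subsets by (intro Max_ge) auto

lemma mrank_attained: "\<exists>I. I \<subseteq> A \<and> ind I \<and> card I = mrank ind A"
proof -
  have "mrank ind A \<in> card ` {I. I \<subseteq> A \<and> ind I}"
    unfolding mrank_def using finite_indep_subsets matroid_indep_empty by (intro Max_in) auto
  then show ?thesis by auto
qed

lemma mrank_empty: "mrank ind {} = 0"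
  using mrank_attained[of "{}"] by auto

lemma mrank_singleton_le_one: "mrank ind {e} \<le> 1"
proof -
  obtain I where "I \<subseteq> {e}" "card I = mrank ind {e}"
    using mrank_attained by blast
  then show ?thesis using card_mono[of "{e}" I] by simp
qed

lemma mrank_singleton_eq_0: "\<not> ind {e} \<Longrightarrow> mrank ind {e} = 0"
  using mrank_attained[of "{e}"] by (metis card.empty subset_singletonD)

lemma indep_extend_to_mrank:
  assumes "ind I" "I \<subseteq> A"
  shows "\<exists>J. I \<subseteq> J \<and> J \<subseteq> A \<and> ind J \<and> card J = mrank ind A"
proof -
  let ?X = "{J. I \<subseteq> J \<and> J \<subseteq> A \<and> ind J}"
  have "finite ?X"
    using finite_indep_subsets[of A] by (rule finite_subset[rotated]) auto
  moreover have "I \<in> ?X" using assms by blast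
  ultimately have "Max (card ` ?X) \<in> card ` ?X" by (intro Max_in) auto
  then obtain J where J: "J \<in> ?X" and J_card: "card J = Max (card ` ?X)"
    by (metis (no_types, lifting) imageE)
  have J_max: "card J' \<le> card J" if "J' \<in> ?X" for J'
    unfolding J_card using \<open>finite ?X\<close> that by (intro Max_ge) auto
  obtain K where K: "K \<subseteq> A" "ind K" "card K = mrank ind A"
    using mrank_attained by blast
  have "\<not> card J < card K"
  proof
    assume "card J < card K"
    then obtain e where "e \<in> K - J" "ind (insert e J)"
      using matroid_augment J K by blast
    then have "insert e J \<in> ?X" using J K by auto
    moreover have "card (insert e J) = card J + 1"
      using \<open>e \<in> K - J\<close> J matroid_indep_finite by simp
    ultimately show False using J_max[of "insert e J"] by linarith
  qed
  moreover have "card J \<le> mrank ind A" using J card_le_mrank by blast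
  ultimately show ?thesis using J K by (intro exI[of _ J]) auto
qed

lemma mrank_submodular: "mrank ind (A \<union> B) + mrank ind (A \<inter> B) \<le> mrank ind A + mrank ind B"
proof -
  obtain I where I: "I \<subseteq> A \<inter> B" "ind I" "card I = mrank ind (A \<inter> B)"
    using mrank_attained by blast
  obtain J where J: "I \<subseteq> J" "J \<subseteq> A \<union> B" "ind J" "card J = mrank ind (A \<union> B)"
    using indep_extend_to_mrank[of I "A \<union> B"] I by blast
  have fin: "finite J" using J matroid_indep_finite by blast
  have "card (J \<inter> A) \<le> mrank ind A" "card (J \<inter> B) \<le> mrank ind B"
    using J matroid_indep_mono by (auto intro!: card_le_mrank)
  moreover have "card I \<le> card (J \<inter> A \<inter> B)"
    using I J fin by (intro card_mono) auto
  moreover have "card (J \<inter> A) + card (J \<inter> B) = card J + card (J \<inter> A \<inter> B)"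
    using card_Un_Int[of "J \<inter> A" "J \<inter> B"] fin J by (simp add: Int_Un_distrib[symmetric]
        Int_absorb2 Int_assoc Int_left_commute)
  ultimately show ?thesis using I J by linarith
qed

end

lemma matroid_contract:
  assumes mat: "matroid E indep" and "indep M" and "F \<inter> M = {}" and "F \<subseteq> E"
  shows "matroid F (\<lambda>I. I \<subseteq> F \<and> indep (I \<union> M))"
proof -
  have fin_F: "finite F" and fin_M: "finite M"
    using assms matroid_finite_ground matroid_indep_finite finite_subset by blast+
  have "\<exists>e\<in>J - I. insert e I \<subseteq> F \<and> indep (insert e I \<union> M)"
    if IJ: "I \<subseteq> F" "indep (I \<union> M)" "J \<subseteq> F" "indep (J \<union> M)" "card I < card J" for I J
  proof -
    have "finite I" "finite J" using IJ fin_F finite_subset by blast+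
    moreover have "I \<inter> M = {}" "J \<inter> M = {}" using IJ assms(3) by blast+
    ultimately have "card (I \<union> M) < card (J \<union> M)"
      using IJ(5) fin_M by (simp add: card_Un_disjoint)
    then obtain e where "e \<in> (J \<union> M) - (I \<union> M)" "indep (insert e (I \<union> M))"
      using matroid_augment[OF mat] IJ by blast
    then show ?thesis using IJ by auto
  qed
  moreover have "indep (I \<union> M)" if "indep (J \<union> M)" "I \<subseteq> J" for I J
    using that matroid_indep_mono[OF mat, of "J \<union> M"] by blast
  ultimately show ?thesis
    using fin_F \<open>indep M\<close> unfolding matroid_def by (intro conjI allI impI; simp; blast)
qed

text \<open>Back-substitution for one step of Gaussian elimination with pivot \<open>c e0\<close>.\<close>

lemma homogeneous_system_extend_solution:
  fixes c y0 :: "'e \<Rightarrow> real"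
  assumes "finite F" "e0 \<in> F" "c e0 \<noteq> 0"
    and y0_supp: "\<forall>e. e \<notin> F - {e0} \<longrightarrow> y0 e = 0" and y0_nonzero: "\<exists>e\<in>F - {e0}. y0 e \<noteq> 0"
    and y0_Q: "\<forall>q\<in>Q. (\<Sum>e\<in>F - {e0}. (q e - q e0 * c e / c e0) * y0 e) = 0"
  shows "\<exists>y. (\<forall>e. e \<notin> F \<longrightarrow> y e = 0) \<and> (\<exists>e\<in>F. y e \<noteq> 0) \<and>
             (\<forall>q\<in>insert c Q. (\<Sum>e\<in>F. q e * y e) = 0)"
proof -
  define S where "S = (\<Sum>e\<in>F - {e0}. c e * y0 e)"
  define y where "y = y0(e0 := - S / c e0)"
  have y_y0: "y e = y0 e" if "e \<in> F - {e0}" for e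
    using that unfolding y_def by simp
  have split: "(\<Sum>e\<in>F. q e * y e) = q e0 * y e0 + (\<Sum>e\<in>F - {e0}. q e * y0 e)" for q
    unfolding sum.remove[OF assms(1,2)] using y_y0 by simp
  have "(\<Sum>e\<in>F. q e * y e) = 0" if "q \<in> Q" for q
  proof -
    have "(\<Sum>e\<in>F - {e0}. (q e - q e0 * c e / c e0) * y0 e)
        = (\<Sum>e\<in>F - {e0}. q e * y0 e) - q e0 / c e0 * S"
      unfolding S_def by (simp add: left_diff_distrib sum_subtractf sum_distrib_left mult.assoc)
    then show ?thesis using y0_Q that split[of q] by (simp add: y_def)
  qed
  moreover have "(\<Sum>e\<in>F. c e * y e) = 0"
    using split[of c] assms(3) by (simp add: y_def S_def)
  moreover have "\<forall>e. e \<notin> F \<longrightarrow> y e = 0" "\<exists>e\<in>F. y e \<noteq> 0"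
    using y0_supp y0_nonzero y_y0 assms(2) unfolding y_def by auto
  ultimately show ?thesis by blast
qed

lemma homogeneous_system_nontrivial_solution:
  fixes Q :: "('e \<Rightarrow> real) set"
  assumes "finite F" "finite Q" "card Q < card F"
  shows "\<exists>y. (\<forall>e. e \<notin> F \<longrightarrow> y e = 0) \<and> (\<exists>e\<in>F. y e \<noteq> 0) \<and>
             (\<forall>c\<in>Q. (\<Sum>e\<in>F. c e * y e) = 0)"
  using assms
proof (induction "card Q" arbitrary: Q F rule: less_induct)
  case less
  show ?case
  proof (cases "Q = {}")
    case True
    obtain e0 where "e0 \<in> F" using less.prems by fastforce
    then show ?thesis using True by (intro exI[of _ "\<lambda>e. if e = e0 then 1 else 0"]) auto
  next
    case False
    then obtain c where c: "c \<in> Q" by blast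
    define Q0 where "Q0 = Q - {c}"
    have Q: "Q = insert c Q0" using c unfolding Q0_def by blast
    have card_Q0: "card Q0 < card Q"
      unfolding Q0_def using less.prems(2) c by (rule card_Diff1_less)
    have fin_Q0: "finite Q0" unfolding Q0_def using less.prems(2) by blast
    show ?thesis
    proof (cases "\<forall>e\<in>F. c e = 0")
      case True
      obtain y where "\<forall>e. e \<notin> F \<longrightarrow> y e = 0" "\<exists>e\<in>F. y e \<noteq> 0"
          "\<forall>q\<in>Q0. (\<Sum>e\<in>F. q e * y e) = 0"
        using less.hyps[OF card_Q0 less.prems(1) fin_Q0] card_Q0 less.prems(3) by auto
      then show ?thesis using True unfolding Q by auto
    next
      case False
      then obtain e0 where e0: "e0 \<in> F" "c e0 \<noteq> 0" by blast
      define reduce where "reduce = (\<lambda>q e. q e - q e0 * c e / c e0)"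
      have fin_reduced: "finite (reduce ` Q0)" and card_reduced: "card (reduce ` Q0) \<le> card Q0"
        using fin_Q0 card_image_le by blast+
      have "card Q0 < card (F - {e0})"
        using less.prems(3) card_Q0 e0(1) less.prems(1) unfolding Q0_def
        by (simp add: card_Diff_singleton c less.prems(2))
      moreover have "finite (F - {e0})" using less.prems(1) by blast
      moreover have "card (reduce ` Q0) < card Q" using card_reduced card_Q0 by linarith
      ultimately have "\<exists>y0. (\<forall>e. e \<notin> F - {e0} \<longrightarrow> y0 e = 0) \<and> (\<exists>e\<in>F - {e0}. y0 e \<noteq> 0) \<and>
          (\<forall>q\<in>reduce ` Q0. (\<Sum>e\<in>F - {e0}. q e * y0 e) = 0)"
        using card_reduced by (intro less.hyps[OF _ _ fin_reduced]) auto
      then obtain y0 where "\<forall>e. e \<notin> F - {e0} \<longrightarrow> y0 e = 0" "\<exists>e\<in>F - {e0}. y0 e \<noteq> 0"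
          "\<forall>q\<in>Q0. (\<Sum>e\<in>F - {e0}. (q e - q e0 * c e / c e0) * y0 e) = 0"
        unfolding reduce_def by auto
      then show ?thesis
        unfolding Q using homogeneous_system_extend_solution[OF less.prems(1), of e0 c] e0 by blast
    qed
  qed
qed

text \<open>Weight outside L is valued at most \<open>Min (f ` L)\<close>, and moving it into L, where each element
  has room \<open>1 - w e\<close>, can only increase the total.\<close>

lemma weighted_sum_le_sum_top:
  fixes f w :: "'e \<Rightarrow> real"
  assumes "finite X" "B \<subseteq> X" "L \<subseteq> X" "card L = k"
    and top: "\<forall>e\<in>L. \<forall>e'\<in>X - L. f e' \<le> f e"
    and f_nonneg: "\<forall>e\<in>X. 0 \<le> f e" and w: "\<forall>e\<in>B. 0 \<le> w e \<and> w e \<le> 1"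
    and w_sum: "sum w B \<le> real k"
  shows "(\<Sum>e\<in>B. f e * w e) \<le> sum f L"
proof (cases "L = {}")
  case True
  have fin_B: "finite B" using assms finite_subset by blast
  then have "sum w B = 0"
    using True \<open>card L = k\<close> w_sum w sum_nonneg[of B w] by auto
  then have "\<forall>e\<in>B. w e = 0" using sum_nonneg_eq_0_iff[OF fin_B] w by blast
  then show ?thesis using True by simp
next
  case False
  have fin_B: "finite B" and fin_L: "finite L" using assms finite_subset by blast+
  define m where "m = Min (f ` L)"
  have m_le: "\<forall>e\<in>L. m \<le> f e" using fin_L m_def by simp
  have "m \<in> f ` L" using fin_L False m_def by simp
  then have m_nonneg: "0 \<le> m" and le_m: "\<forall>e\<in>X - L. f e \<le> m"
    using \<open>L \<subseteq> X\<close> f_nonneg top by auto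
  have outside: "(\<Sum>e\<in>B - L. f e * w e) \<le> m * sum w (B - L)"
    unfolding sum_distrib_left
    using le_m \<open>B \<subseteq> X\<close> w by (intro sum_mono mult_right_mono) auto
  have inside: "f e * w e + m * (1 - w e) \<le> f e" if "e \<in> B \<inter> L" for e
  proof -
    have "(f e - m) * (w e - 1) \<le> 0"
      using m_le w that by (intro mult_nonneg_nonpos) auto
    then show ?thesis by (simp add: algebra_simps)
  qed
  have "(\<Sum>e\<in>B \<inter> L. f e * w e) + m * (real (card (B \<inter> L)) - sum w (B \<inter> L))
      = (\<Sum>e\<in>B \<inter> L. f e * w e + m * (1 - w e))"
    by (simp add: sum.distrib sum_subtractf sum_distrib_left right_diff_distrib)
  also have "\<dots> \<le> sum f (B \<inter> L)"
    using inside by (rule sum_mono)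
  finally have "(\<Sum>e\<in>B \<inter> L. f e * w e) + m * (real (card (B \<inter> L)) - sum w (B \<inter> L))
      \<le> sum f (B \<inter> L)" .
  moreover have "m * real (card (L - B)) \<le> sum f (L - B)"
    using sum_mono[of "L - B" "\<lambda>_. m" f] m_le by (simp add: mult.commute)
  moreover have "card L = card (B \<inter> L) + card (L - B)"
    using fin_L card_Int_Diff[of L B] by (simp add: Int_commute)
  moreover have "sum f L = sum f (B \<inter> L) + sum f (L - B)"
    using fin_L sum.Int_Diff[of L f B] by (simp add: Int_commute)
  moreover have "(\<Sum>e\<in>B. f e * w e) = (\<Sum>e\<in>B \<inter> L. f e * w e) + (\<Sum>e\<in>B - L. f e * w e)"
    "sum w B = sum w (B \<inter> L) + sum w (B - L)"
    using fin_B sum.Int_Diff by blast+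
  ultimately have "(\<Sum>e\<in>B. f e * w e) \<le> sum f L + m * (sum w B - real k)"
    using outside \<open>card L = k\<close> by (simp add: algebra_simps)
  moreover have "m * (sum w B - real k) \<le> 0"
    using m_nonneg w_sum by (simp add: mult_nonneg_nonpos)
  ultimately show ?thesis by linarith
qed

lemma sum_diff_top_le:
  fixes f x :: "'e \<Rightarrow> real"
  assumes "finite A" "finite B" "A \<inter> B = {}"
    and f_nonneg: "\<forall>e\<in>A \<union> B. 0 \<le> f e" and x: "\<forall>e\<in>B. 0 \<le> x e \<and> x e \<le> 1"
    and slack: "(\<Sum>e\<in>B. 1 - x e) \<le> real k"
    and L: "L \<subseteq> A \<union> B" "card L = min k (card (A \<union> B))"
    and top: "\<forall>e\<in>L. \<forall>e'\<in>(A \<union> B) - L. f e' \<le> f e"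
  shows "sum f ((A \<union> B) - L) \<le> (\<Sum>e\<in>B. f e * x e) + sum f A"
proof (cases "card (A \<union> B) \<le> k")
  case True
  then have "L = A \<union> B"
    using L card_subset_eq[of "A \<union> B" L] assms(1,2) by simp
  moreover have "0 \<le> (\<Sum>e\<in>B. f e * x e) + sum f A"
    using f_nonneg x by (intro add_nonneg_nonneg sum_nonneg mult_nonneg_nonneg) auto
  ultimately show ?thesis by simp
next
  case False
  then have "(\<Sum>e\<in>B. f e * (1 - x e)) \<le> sum f L"
    using L x slack assms(1,2) f_nonneg top
    by (intro weighted_sum_le_sum_top[of "A \<union> B"]) auto
  moreover have "sum f ((A \<union> B) - L) = sum f A + sum f B - sum f L"
    using L assms(1-3) by (simp add: sum_diff sum.union_disjoint)
  ultimately show ?thesis by (simp add: right_diff_distrib sum_subtractf)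
qed

text \<open>Double counting: each hyperedge contributes its slack \<open>1 - x e\<close> to at most k vertices.\<close>

lemma card_lt_sum_slack:
  fixes x :: "'e \<Rightarrow> real"
  assumes "finite F" "finite W" "F \<noteq> {}"
    and x: "\<forall>e\<in>F. 0 < x e \<and> x e < 1"
    and ends: "\<forall>e\<in>F. finite (ends e) \<and> card (ends e) \<le> k"
    and slack: "\<forall>v\<in>W. real k < (\<Sum>e\<in>hdelta ends F v. 1 - x e)"
  shows "real (card W) < (\<Sum>e\<in>F. 1 - x e)"
proof (cases "W = {}")
  case True
  then show ?thesis using assms(1,3) x by (simp add: sum_pos)
next
  case False
  have "real k * real (card W) = (\<Sum>v\<in>W. real k)" by simp
  also have "\<dots> < (\<Sum>v\<in>W. \<Sum>e\<in>hdelta ends F v. 1 - x e)"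
    using slack assms(2) False by (intro sum_strict_mono) auto
  also have "\<dots> = (\<Sum>e\<in>F. \<Sum>v\<in>{v\<in>W. v \<in> ends e}. 1 - x e)"
    unfolding hdelta_def using sum.swap_restrict[OF assms(2,1)] .
  also have "\<dots> \<le> (\<Sum>e\<in>F. real k * (1 - x e))"
  proof (intro sum_mono)
    fix e assume e: "e \<in> F"
    have "card {v\<in>W. v \<in> ends e} \<le> card (ends e)"
      using ends e by (intro card_mono) auto
    moreover have "card (ends e) \<le> k" using ends e by blast
    ultimately have "card {v\<in>W. v \<in> ends e} \<le> k" by linarith
    then show "(\<Sum>v\<in>{v\<in>W. v \<in> ends e}. 1 - x e) \<le> real k * (1 - x e)"
      using x e by (simp add: mult_right_mono)
  qed
  finally show ?thesis by (simp add: sum_distrib_left[symmetric] mult_less_cancel_left)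
qed

lemma maxchain_mem_if_comparable:
  assumes "subset.maxchain T C" "S \<in> T" "\<forall>X\<in>C. X \<subseteq> S \<or> S \<subseteq> X"
  shows "S \<in> C"
proof (rule ccontr)
  assume "S \<notin> C"
  have "subset.chain T (insert S C)"
    using assms subset.maxchain_imp_chain[OF assms(1)] by (auto simp: subset_chain_insert)
  moreover have "C \<subset> insert S C" using \<open>S \<notin> C\<close> by blast
  ultimately show False using assms(1) unfolding subset.maxchain_def by blast
qed

text \<open>For D in the chain with greatest proper predecessor P, the set \<open>(A \<inter> D) \<union> P\<close> is
  comparable with the whole chain, hence equals P or D; either way \<open>A \<inter> D\<close> reduces to \<open>A \<inter> P\<close>.\<close>

lemma sum_Int_maxchain_eq_0:
  fixes y :: "'e \<Rightarrow> real"
  assumes "finite F" "T \<subseteq> Pow F" "{} \<in> T"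
    and closed: "\<forall>A\<in>T. \<forall>B\<in>T. A \<union> B \<in> T \<and> A \<inter> B \<in> T"
    and C: "subset.maxchain T C" and zero: "\<forall>X\<in>C. sum y X = 0"
    and "A \<in> T" "D \<in> C"
  shows "sum y (A \<inter> D) = 0"
proof -
  have C_chain: "C \<subseteq> T" "\<forall>X\<in>C. \<forall>Y\<in>C. X \<subseteq> Y \<or> Y \<subseteq> X"
    using subset.maxchain_imp_chain[OF C] by (auto simp: subset_chain_def)
  have fin_C: "finite C"
    using C_chain assms(1,2) finite_subset[of C "Pow F"] by auto
  have fin_T: "finite X" if "X \<in> T" for X
    using that assms(1,2) finite_subset by blast
  have "{} \<in> C" using maxchain_mem_if_comparable[OF C assms(3)] by blast
  show ?thesis
    using \<open>D \<in> C\<close>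
  proof (induction "card D" arbitrary: D rule: less_induct)
    case less
    define P where "P = \<Union>{X\<in>C. X \<subset> D}"
    show ?case
    proof (cases "D = {}")
      case False
      then have "P \<in> {X\<in>C. X \<subset> D}"
        unfolding P_def using fin_C \<open>{} \<in> C\<close> C_chain
        by (intro Union_in_chain) (auto simp: subset_chain_def)
      then have P: "P \<in> C" "P \<subset> D" by auto
      have below_P: "X \<subseteq> P" if "X \<in> C" "X \<subset> D" for X
        using that unfolding P_def by blast
      have "sum y (A \<inter> P) = 0"
        using less.hyps P less.prems fin_T C_chain(1) psubset_card_mono by blast
      define S where "S = (A \<inter> D) \<union> P"
      have "S \<in> T"
        unfolding S_def using closed \<open>A \<in> T\<close> less.prems P C_chain(1) by blast
      moreover have "X \<subseteq> S \<or> S \<subseteq> X" if "X \<in> C" for X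
      proof -
        have "D \<subseteq> X \<or> X \<subset> D" using C_chain(2) less.prems that by blast
        then show ?thesis using P(2) below_P[OF that] unfolding S_def by blast
      qed
      ultimately have "S \<in> C" by (intro maxchain_mem_if_comparable[OF C]) auto
      have fin_D: "finite D" using fin_T C_chain(1) less.prems by blast
      show ?thesis
      proof (cases "S = D")
        case True
        then have "A \<inter> D = (A \<inter> P) \<union> (D - P)" using P(2) unfolding S_def by blast
        moreover have "finite P" using fin_D P(2) finite_subset by blast
        then have "sum y ((A \<inter> P) \<union> (D - P)) = sum y (A \<inter> P) + sum y (D - P)"
          using fin_D by (intro sum.union_disjoint) auto
        moreover have "sum y D = sum y (D - P) + sum y P"
          using P(2) fin_D by (intro sum.subset_diff) auto
        ultimately show ?thesis
          using \<open>sum y (A \<inter> P) = 0\<close> zero less.prems P(1) by simp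
      next
        case False
        then have "S \<subseteq> P" using below_P \<open>S \<in> C\<close> P(2) unfolding S_def by blast
        then have "A \<inter> D = A \<inter> P" unfolding S_def using P(2) by blast
        then show ?thesis using \<open>sum y (A \<inter> P) = 0\<close> by simp
      qed
    qed simp
  qed
qed

text \<open>The top of the chain contains A, as \<open>A \<union> \<Union>C\<close> is comparable with every member of C.\<close>

lemma sum_zero_on_lattice_family_if_zero_on_maxchain:
  fixes y :: "'e \<Rightarrow> real"
  assumes "finite F" "T \<subseteq> Pow F" "{} \<in> T"
    and closed: "\<forall>A\<in>T. \<forall>B\<in>T. A \<union> B \<in> T \<and> A \<inter> B \<in> T"
    and C: "subset.maxchain T C" and zero: "\<forall>X\<in>C. sum y X = 0"
    and "A \<in> T"
  shows "sum y A = 0"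
proof -
  have C_T: "C \<subseteq> T" using subset.maxchain_imp_chain[OF C] by (simp add: subset_chain_def)
  then have "finite C" using assms(1,2) finite_subset[of C "Pow F"] by auto
  moreover have "{} \<in> C" using maxchain_mem_if_comparable[OF C assms(3)] by blast
  ultimately have "\<Union>C \<in> C"
    using subset.maxchain_imp_chain[OF C] by (intro Union_in_chain) auto
  moreover have "A \<union> \<Union>C \<in> C"
    using closed \<open>A \<in> T\<close> \<open>\<Union>C \<in> C\<close> C_T
    by (intro maxchain_mem_if_comparable[OF C]) blast+
  then have "A \<inter> \<Union>C = A" by blast
  ultimately show ?thesis using sum_Int_maxchain_eq_0[OF assms] by metis
qed

lemma lp_feasible_positive_margin:
  assumes feas: "lp_feasible ends d W F ind b' x" and "finite F" and x_pos: "\<forall>e\<in>F. 0 < x e"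
  shows "\<exists>m>0. (\<forall>e\<in>F. m \<le> x e) \<and>
    (\<forall>A. A \<subseteq> F \<and> sum x A \<noteq> real (mrank ind A) \<longrightarrow> m \<le> real (mrank ind A) - sum x A)"
proof -
  have x_rank: "\<forall>A. A \<subseteq> F \<longrightarrow> sum x A \<le> real (mrank ind A)"
    using feas unfolding lp_feasible_def by simp
  define gaps where "gaps = x ` F \<union>
    (\<lambda>A. real (mrank ind A) - sum x A) ` {A. A \<subseteq> F \<and> sum x A \<noteq> real (mrank ind A)}"
  have "finite gaps" unfolding gaps_def using \<open>finite F\<close> by simp
  moreover have "0 < g" if "g \<in> gaps" for g
    using that unfolding gaps_def
  proof (elim UnE imageE)
    fix e assume "g = x e" "e \<in> F"
    then show ?thesis using x_pos by simp
  next
    fix A assume "g = real (mrank ind A) - sum x A"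
      and "A \<in> {A. A \<subseteq> F \<and> sum x A \<noteq> real (mrank ind A)}"
    then show ?thesis using x_rank by (simp add: less_le)
  qed
  ultimately have "0 < Min (insert 1 gaps)" and "\<forall>g\<in>gaps. Min (insert 1 gaps) \<le> g" by auto
  moreover have "x e \<in> gaps" if "e \<in> F" for e unfolding gaps_def using that by blast
  moreover have "real (mrank ind A) - sum x A \<in> gaps"
    if "A \<subseteq> F" "sum x A \<noteq> real (mrank ind A)" for A
    unfolding gaps_def using that by blast
  ultimately show ?thesis by (intro exI[of _ "Min (insert 1 gaps)"]) auto
qed

lemma lp_feasible_add_direction:
  fixes x y :: "'e \<Rightarrow> real"
  assumes feas: "lp_feasible ends d W F ind b' x"
    and y_supp: "\<forall>e. e \<notin> F \<longrightarrow> y e = 0"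
    and y_degree: "\<forall>v\<in>W. (\<Sum>e\<in>hdelta ends F v. d v e * y e) = 0"
    and y_tight: "\<forall>A. A \<subseteq> F \<and> sum x A = real (mrank ind A) \<longrightarrow> sum y A = 0"
    and margin_x: "\<forall>e\<in>F. m \<le> x e"
    and margin_rank: "\<forall>A. A \<subseteq> F \<and> sum x A \<noteq> real (mrank ind A) \<longrightarrow>
      m \<le> real (mrank ind A) - sum x A"
    and small: "\<forall>A. A \<subseteq> F \<longrightarrow> \<bar>t * sum y A\<bar> \<le> m"
  shows "lp_feasible ends d W F ind b' (\<lambda>e. x e + t * y e)"
proof -
  have x_supp: "\<forall>e. e \<notin> F \<longrightarrow> x e = 0"
    and x_degree: "\<forall>v\<in>W. (\<Sum>e\<in>hdelta ends F v. d v e * x e) \<le> b' v"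
    using feas unfolding lp_feasible_def by simp_all
  have "0 \<le> x e + t * y e" if "e \<in> F" for e
    using small[rule_format, of "{e}"] margin_x that by (force simp: abs_le_iff)
  moreover have "(\<Sum>e\<in>A. x e + t * y e) \<le> real (mrank ind A)" if "A \<subseteq> F" for A
  proof (cases "sum x A = real (mrank ind A)")
    case True
    then show ?thesis using y_tight that by (simp add: sum.distrib sum_distrib_left[symmetric])
  next
    case False
    then have "m \<le> real (mrank ind A) - sum x A" using margin_rank that by blast
    moreover have "t * sum y A \<le> m" using small that by (simp add: abs_le_iff)
    ultimately show ?thesis by (simp add: sum.distrib sum_distrib_left[symmetric])
  qed
  moreover have "(\<Sum>e\<in>hdelta ends F v. d v e * (x e + t * y e)) \<le> b' v" if "v \<in> W" for v
  proof -
    have "(\<Sum>e\<in>hdelta ends F v. d v e * (x e + t * y e))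
        = (\<Sum>e\<in>hdelta ends F v. d v e * x e) + t * (\<Sum>e\<in>hdelta ends F v. d v e * y e)"
      by (simp add: algebra_simps sum.distrib sum_distrib_left)
    then show ?thesis using x_degree y_degree that by simp
  qed
  ultimately show ?thesis unfolding lp_feasible_def using x_supp y_supp by simp
qed

text \<open>Both \<open>x \<plusminus> \<epsilon> y\<close> stay feasible once \<open>\<epsilon>\<close> is small against the positive margin of the
  constraints that are not tight.\<close>

lemma lp_not_extreme_if_tight_direction:
  fixes x y :: "'e \<Rightarrow> real"
  assumes feas: "lp_feasible ends d W F ind b' x" and "finite F"
    and x_pos: "\<forall>e\<in>F. 0 < x e"
    and y_supp: "\<forall>e. e \<notin> F \<longrightarrow> y e = 0" and y_nonzero: "\<exists>e\<in>F. y e \<noteq> 0"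
    and y_degree: "\<forall>v\<in>W. (\<Sum>e\<in>hdelta ends F v. d v e * y e) = 0"
    and y_tight: "\<forall>A. A \<subseteq> F \<and> sum x A = real (mrank ind A) \<longrightarrow> sum y A = 0"
  shows "\<not> lp_extreme ends d W F ind b' x"
proof -
  obtain m where "0 < m" and margin: "\<forall>e\<in>F. m \<le> x e"
    "\<forall>A. A \<subseteq> F \<and> sum x A \<noteq> real (mrank ind A) \<longrightarrow> m \<le> real (mrank ind A) - sum x A"
    using lp_feasible_positive_margin[OF feas \<open>finite F\<close> x_pos] by blast
  obtain e1 where e1: "e1 \<in> F" "y e1 \<noteq> 0" using y_nonzero by blast
  define Y where "Y = (\<Sum>e\<in>F. \<bar>y e\<bar>)"
  have sum_y_le: "\<bar>sum y A\<bar> \<le> Y" if "A \<subseteq> F" for A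
    unfolding Y_def using sum_mono2[OF \<open>finite F\<close> that, of "\<lambda>e. \<bar>y e\<bar>"]
    by (intro order_trans[OF sum_abs]) simp
  have "0 < Y" using sum_y_le[of "{e1}"] e1 by simp
  define eps where "eps = m / Y"
  have "0 < eps" unfolding eps_def using \<open>0 < m\<close> \<open>0 < Y\<close> by simp
  have feasible: "lp_feasible ends d W F ind b' (\<lambda>e. x e + t * y e)" if "\<bar>t\<bar> = eps" for t
  proof (rule lp_feasible_add_direction[OF feas y_supp y_degree y_tight margin])
    have "\<bar>t * sum y A\<bar> \<le> eps * Y" if "A \<subseteq> F" for A
      unfolding abs_mult \<open>\<bar>t\<bar> = eps\<close> using sum_y_le[OF that] \<open>0 < eps\<close> by simp
    then show "\<forall>A. A \<subseteq> F \<longrightarrow> \<bar>t * sum y A\<bar> \<le> m"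
      unfolding eps_def using \<open>0 < Y\<close> by simp
  qed
  have "x = (\<lambda>e. (1/2) * (x e + eps * y e) + (1 - 1/2) * (x e + (- eps) * y e))"
    by (simp add: algebra_simps)
  moreover have "(\<lambda>e. x e + eps * y e) \<noteq> (\<lambda>e. x e + (- eps) * y e)"
    using e1 \<open>0 < eps\<close> by (auto dest: fun_cong[where x = e1])
  ultimately have "\<exists>y z t. lp_feasible ends d W F ind b' y \<and> lp_feasible ends d W F ind b' z \<and>
      y \<noteq> z \<and> 0 < t \<and> t < 1 \<and> x = (\<lambda>e. t * y e + (1 - t) * z e)"
    using feasible[of eps] feasible[of "- eps"] \<open>0 < eps\<close>
    by (intro exI[of _ "\<lambda>e. x e + eps * y e"] exI[of _ "\<lambda>e. x e + (- eps) * y e"]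
        exI[of _ "1/2::real"] conjI) auto
  then show ?thesis unfolding lp_extreme_def by blast
qed

lemma lp_feasible_le_one:
  assumes "matroid F ind" "lp_feasible ends d W F ind b' x" "e \<in> F"
  shows "x e \<le> 1"
proof -
  have "sum x {e} \<le> real (mrank ind {e})" using assms(2,3) unfolding lp_feasible_def by blast
  moreover have "real (mrank ind {e}) \<le> 1" using mrank_singleton_le_one[OF assms(1), of e] by simp
  ultimately show ?thesis by simp
qed

lemma lp_feasible_one_indep:
  assumes "matroid F ind" "lp_feasible ends d W F ind b' x" "e \<in> F" "x e = 1"
  shows "ind {e}"
proof (rule ccontr)
  assume "\<not> ind {e}"
  moreover have "sum x {e} \<le> real (mrank ind {e})" using assms(2,3) unfolding lp_feasible_def by blast
  ultimately show False using mrank_singleton_eq_0[OF assms(1)] \<open>x e = 1\<close> by simp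
qed

lemma lp_feasible_one_demand_le:
  assumes feas: "lp_feasible ends d W F ind b' x" and "finite F"
    and d_nonneg: "\<forall>e\<in>F. \<forall>v\<in>ends e. 0 \<le> d v e"
    and "e \<in> F" "x e = 1" "v \<in> W" "v \<in> ends e"
  shows "d v e \<le> b' v"
proof -
  have x_nonneg: "\<forall>e\<in>F. 0 \<le> x e"
    and x_degree: "(\<Sum>e\<in>hdelta ends F v. d v e * x e) \<le> b' v"
    using feas \<open>v \<in> W\<close> unfolding lp_feasible_def by simp_all
  have "e \<in> hdelta ends F v" unfolding hdelta_def using assms(4,7) by simp
  moreover have "\<forall>e'\<in>hdelta ends F v. 0 \<le> d v e' * x e'"
    unfolding hdelta_def using d_nonneg x_nonneg by auto
  moreover have "finite (hdelta ends F v)" unfolding hdelta_def using \<open>finite F\<close> by simp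
  ultimately have "d v e * x e \<le> (\<Sum>e'\<in>hdelta ends F v. d v e' * x e')"
    by (intro member_le_sum) auto
  then show ?thesis using x_degree \<open>x e = 1\<close> by simp
qed

definition tight_sets :: "('e set \<Rightarrow> bool) \<Rightarrow> 'e set \<Rightarrow> ('e \<Rightarrow> real) \<Rightarrow> 'e set set" where
  "tight_sets ind F x = {A. A \<subseteq> F \<and> sum x A = real (mrank ind A)}"

lemma tight_sets_Un_Int:
  assumes mat: "matroid F ind" and x_rank: "\<forall>A. A \<subseteq> F \<longrightarrow> sum x A \<le> real (mrank ind A)"
    and "A \<in> tight_sets ind F x" "B \<in> tight_sets ind F x"
  shows "A \<union> B \<in> tight_sets ind F x \<and> A \<inter> B \<in> tight_sets ind F x"
proof -
  have "A \<subseteq> F" "B \<subseteq> F" "sum x A = mrank ind A" "sum x B = mrank ind B"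
    using assms(3,4) unfolding tight_sets_def by auto
  moreover have "finite A" "finite B"
    using \<open>A \<subseteq> F\<close> \<open>B \<subseteq> F\<close> matroid_finite_ground[OF mat] finite_subset by blast+
  then have "sum x (A \<union> B) + sum x (A \<inter> B) = sum x A + sum x B"
    by (rule sum.union_inter)
  moreover have "real (mrank ind (A \<union> B)) + mrank ind (A \<inter> B) \<le> mrank ind A + mrank ind B"
    using mrank_submodular[OF mat, of A B] by linarith
  moreover have "sum x (A \<union> B) \<le> mrank ind (A \<union> B)" "sum x (A \<inter> B) \<le> mrank ind (A \<inter> B)"
    using x_rank \<open>A \<subseteq> F\<close> \<open>B \<subseteq> F\<close> by (simp_all add: le_infI1)
  ultimately show ?thesis unfolding tight_sets_def by auto
qed

text \<open>Along a chain of tight sets x-sums strictly increase when x is positive, so the ranks of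
  the nonempty members are distinct positive integers bounded by \<open>sum x F\<close>.\<close>

lemma card_tight_chain_le:
  assumes "finite F" and x_pos: "\<forall>e\<in>F. 0 < x e"
    and chain: "subset.chain (tight_sets ind F x) C"
  shows "real (card (C - {{}})) \<le> sum x F"
proof -
  have C: "C \<subseteq> tight_sets ind F x" "\<forall>X\<in>C. \<forall>Y\<in>C. X \<subseteq> Y \<or> Y \<subseteq> X"
    using chain by (auto simp: subset_chain_def)
  have sum_less: "sum x X < sum x Y" if XY: "X \<subset> Y" "Y \<subseteq> F" for X Y
  proof -
    obtain e where "e \<in> Y - X" using XY(1) by blast
    then show ?thesis
      using XY x_pos \<open>finite F\<close> finite_subset[OF XY(2)]
      by (intro sum_strict_mono2[of Y X e]) (auto simp: less_imp_le)
  qed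
  have rank_eq: "real (mrank ind X) = sum x X" "X \<subseteq> F" if "X \<in> C" for X
    using C(1) that unfolding tight_sets_def by auto
  define N where "N = nat \<lfloor>sum x F\<rfloor>"
  have "inj_on (mrank ind) (C - {{}})"
  proof (rule inj_onI)
    fix X Y assume "X \<in> C - {{}}" "Y \<in> C - {{}}" "mrank ind X = mrank ind Y"
    then show "X = Y"
      using C(2) rank_eq sum_less by (metis DiffD1 order_less_irrefl psubsetI)
  qed
  moreover have "mrank ind ` (C - {{}}) \<subseteq> {1..N}"
  proof
    fix r assume "r \<in> mrank ind ` (C - {{}})"
    then obtain X where X: "X \<in> C" "X \<noteq> {}" "r = mrank ind X" by blast
    have "0 < sum x X" using sum_less[of "{}" X] rank_eq[OF X(1)] X(2) by auto
    moreover have "sum x X \<le> sum x F"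
      using rank_eq[OF X(1)] \<open>finite F\<close> x_pos by (intro sum_mono2) (auto simp: less_imp_le)
    ultimately show "r \<in> {1..N}"
      using rank_eq[OF X(1)] X(3) unfolding N_def by (simp add: le_nat_floor)
  qed
  ultimately have "card (C - {{}}) \<le> N"
    using card_inj_on_le[of "mrank ind" "C - {{}}" "{1..N}"] by simp
  moreover have "real N \<le> sum x F"
    unfolding N_def using x_pos by (simp add: sum_nonneg less_imp_le)
  ultimately show ?thesis by linarith
qed

lemma sum_if_mem_mult:
  fixes c y :: "'e \<Rightarrow> real"
  assumes "finite F" "S \<subseteq> F"
  shows "(\<Sum>e\<in>F. (if e \<in> S then c e else 0) * y e) = (\<Sum>e\<in>S. c e * y e)"
proof -
  have "(\<Sum>e\<in>F. (if e \<in> S then c e else 0) * y e) = (\<Sum>e\<in>F. if e \<in> S then c e * y e else 0)"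
    by (rule sum.cong) auto
  also have "\<dots> = (\<Sum>e\<in>F \<inter> S. c e * y e)" using assms(1) by (rule sum.inter_restrict[symmetric])
  finally show ?thesis using assms(2) by (simp add: Int_absorb1)
qed

lemma exists_direction_vanishing_on_chain_and_degrees:
  fixes d :: "'v \<Rightarrow> 'e \<Rightarrow> real"
  assumes "finite F" "finite W" "finite C" "\<forall>X\<in>C. X \<subseteq> F"
    and card_lt: "card (C - {{}}) + card W < card F"
  shows "\<exists>y. (\<forall>e. e \<notin> F \<longrightarrow> y e = 0) \<and> (\<exists>e\<in>F. y e \<noteq> 0) \<and>
             (\<forall>X\<in>C. sum y X = 0) \<and> (\<forall>v\<in>W. (\<Sum>e\<in>hdelta ends F v. d v e * y e) = 0)"
proof -
  define Q :: "('e \<Rightarrow> real) set" where "Q = (\<lambda>X e. if e \<in> X then 1 else 0) ` (C - {{}}) \<union>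
    (\<lambda>v e. if e \<in> hdelta ends F v then d v e else 0) ` W"
  have "finite Q" unfolding Q_def using assms(2,3) by blast
  have "card Q \<le> card ((\<lambda>X e. if e \<in> X then 1 else 0 :: real) ` (C - {{}})) +
      card ((\<lambda>v e. if e \<in> hdelta ends F v then d v e else 0) ` W)"
    unfolding Q_def by (rule card_Un_le)
  also have "\<dots> \<le> card (C - {{}}) + card W"
    using assms(2,3) by (intro add_mono card_image_le) auto
  finally have "card Q < card F" using card_lt by linarith
  then obtain y where y_supp: "\<forall>e. e \<notin> F \<longrightarrow> y e = 0" and y_nonzero: "\<exists>e\<in>F. y e \<noteq> 0"
    and y_Q: "\<forall>c\<in>Q. (\<Sum>e\<in>F. c e * y e) = 0"
    using homogeneous_system_nontrivial_solution[OF \<open>finite F\<close> \<open>finite Q\<close>] by blast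
  have "sum y X = 0" if "X \<in> C" for X
  proof (cases "X = {}")
    case False
    then have "(\<lambda>e. if e \<in> X then 1 else 0) \<in> Q" unfolding Q_def using that by blast
    then have "(\<Sum>e\<in>F. (if e \<in> X then 1 else 0) * y e) = 0" by (rule y_Q[rule_format])
    then show ?thesis
      using sum_if_mem_mult[OF \<open>finite F\<close>, of X "\<lambda>_. 1" y] assms(4) that by simp
  qed simp
  moreover have "(\<Sum>e\<in>hdelta ends F v. d v e * y e) = 0" if "v \<in> W" for v
  proof -
    have "(\<lambda>e. if e \<in> hdelta ends F v then d v e else 0) \<in> Q" unfolding Q_def using that by blast
    then have "(\<Sum>e\<in>F. (if e \<in> hdelta ends F v then d v e else 0) * y e) = 0"
      by (rule y_Q[rule_format])
    moreover have "hdelta ends F v \<subseteq> F" unfolding hdelta_def by blast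
    ultimately show ?thesis using sum_if_mem_mult[OF \<open>finite F\<close>] by simp
  qed
  ultimately show ?thesis using y_supp y_nonzero by blast
qed

lemma extreme_point_has_low_slack_vertex:
  fixes x :: "'e \<Rightarrow> real"
  assumes mat: "matroid F ind" and "finite W" and "F \<noteq> {}"
    and extreme: "lp_extreme ends d W F ind b' x"
    and fractional: "\<forall>e\<in>F. x e \<noteq> 0 \<and> x e \<noteq> 1"
    and ends: "\<forall>e\<in>F. finite (ends e) \<and> card (ends e) \<le> k"
  shows "\<exists>v\<in>W. real (card (hdelta ends F v)) - sum x (hdelta ends F v) \<le> real k"
proof (rule ccontr)
  assume "\<not> ?thesis"
  then have slack: "\<forall>v\<in>W. real k < (\<Sum>e\<in>hdelta ends F v. 1 - x e)"
    by (simp add: sum_subtractf not_le)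
  have feas: "lp_feasible ends d W F ind b' x" using extreme unfolding lp_extreme_def by blast
  then have x_nonneg: "\<forall>e\<in>F. 0 \<le> x e"
    and x_rank: "\<forall>A. A \<subseteq> F \<longrightarrow> sum x A \<le> real (mrank ind A)"
    unfolding lp_feasible_def by simp_all
  have "finite F" using matroid_finite_ground[OF mat] .
  have "x e \<le> 1" if "e \<in> F" for e using lp_feasible_le_one[OF mat feas that] .
  then have x_open: "\<forall>e\<in>F. 0 < x e \<and> x e < 1"
    using x_nonneg fractional by (simp add: less_le)
  have "real (card W) < real (card F) - sum x F"
    using card_lt_sum_slack[OF \<open>finite F\<close> \<open>finite W\<close> \<open>F \<noteq> {}\<close> x_open ends slack]
    by (simp add: sum_subtractf)
  let ?T = "tight_sets ind F x"
  have T_Pow: "?T \<subseteq> Pow F" unfolding tight_sets_def by blast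
  obtain C where C: "subset.maxchain ?T C" using subset.Hausdorff by blast
  then have chain: "subset.chain ?T C" by (rule subset.maxchain_imp_chain)
  then have "C \<subseteq> Pow F" using T_Pow unfolding subset_chain_def by blast
  then have "finite C" using \<open>finite F\<close> by (meson finite_Pow_iff finite_subset)
  have "real (card (C - {{}})) \<le> sum x F"
    using card_tight_chain_le[OF \<open>finite F\<close> _ chain] x_open by blast
  then have "card (C - {{}}) + card W < card F"
    using \<open>real (card W) < _\<close> by linarith
  then obtain y where y_supp: "\<forall>e. e \<notin> F \<longrightarrow> y e = 0" and y_nonzero: "\<exists>e\<in>F. y e \<noteq> 0"
    and y_C: "\<forall>X\<in>C. sum y X = 0" and y_degree: "\<forall>v\<in>W. (\<Sum>e\<in>hdelta ends F v. d v e * y e) = 0"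
    using exists_direction_vanishing_on_chain_and_degrees[OF \<open>finite F\<close> \<open>finite W\<close> \<open>finite C\<close>]
      \<open>C \<subseteq> Pow F\<close> by blast
  have "{} \<in> ?T" unfolding tight_sets_def using mrank_empty[OF mat] by simp
  moreover have "\<forall>A\<in>?T. \<forall>B\<in>?T. A \<union> B \<in> ?T \<and> A \<inter> B \<in> ?T"
    using tight_sets_Un_Int[OF mat x_rank] by blast
  ultimately have "sum y A = 0" if "A \<in> ?T" for A
    by (rule sum_zero_on_lattice_family_if_zero_on_maxchain[OF \<open>finite F\<close> T_Pow _ _ C y_C that])
  then have "\<forall>A. A \<subseteq> F \<and> sum x A = real (mrank ind A) \<longrightarrow> sum y A = 0"
    unfolding tight_sets_def by blast
  then have "\<not> lp_extreme ends d W F ind b' x"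
    using lp_not_extreme_if_tight_direction[OF feas \<open>finite F\<close> _ y_supp y_nonzero y_degree] x_open
    by blast
  then show False using extreme by blast
qed

text \<open>L ranges over all admissible choices of the set \<open>L(v)\<close> of the statement.\<close>

definition relaxed_feasible_at ::
  "('e \<Rightarrow> 'v set) \<Rightarrow> ('v \<Rightarrow> 'e \<Rightarrow> real) \<Rightarrow> nat \<Rightarrow> ('v \<Rightarrow> real) \<Rightarrow> 'v \<Rightarrow> 'e set \<Rightarrow> bool" where
  "relaxed_feasible_at ends d k b v X \<longleftrightarrow>
     (\<forall>L. L \<subseteq> hdelta ends X v \<and> card L = min k (card (hdelta ends X v)) \<and>
          (\<forall>e\<in>L. \<forall>e'\<in>hdelta ends X v - L. d v e' \<le> d v e)
       \<longrightarrow> (\<Sum>e\<in>hdelta ends X v - L. d v e) \<le> b v)"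

text \<open>The matroid of the procedure is the contraction of \<open>indep\<close> by the chosen edges M,
  restricted to F; b' is the residual capacity of the vertices still in W; and a vertex
  already removed from W stays relaxed-feasible whichever of the remaining edges are added.\<close>

definition irp_invariant ::
  "'v set \<Rightarrow> 'e set \<Rightarrow> ('e \<Rightarrow> 'v set) \<Rightarrow> nat \<Rightarrow> ('v \<Rightarrow> real) \<Rightarrow> ('v \<Rightarrow> 'e \<Rightarrow> real)
   \<Rightarrow> ('e set \<Rightarrow> bool) \<Rightarrow> ('v, 'e) irp_state \<Rightarrow> bool" where
  "irp_invariant V E ends k b d indep s \<longleftrightarrow> (case s of (W, F, ind, b', M) \<Rightarrow>
     W \<subseteq> V \<and> F \<subseteq> E \<and> M \<subseteq> E \<and> F \<inter> M = {} \<and> indep M \<and>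
     ind = (\<lambda>I. I \<subseteq> F \<and> indep (I \<union> M)) \<and>
     (\<forall>v\<in>W. b' v = b v - (\<Sum>e\<in>hdelta ends M v. d v e) \<and> 0 \<le> b' v) \<and>
     (\<forall>v\<in>V - W. \<forall>N\<subseteq>F. relaxed_feasible_at ends d k b v (M \<union> N)))"

context
  fixes V :: "'v set" and E :: "'e set" and ends :: "'e \<Rightarrow> 'v set" and k :: nat
    and b :: "'v \<Rightarrow> real" and d :: "'v \<Rightarrow> 'e \<Rightarrow> real" and indep :: "'e set \<Rightarrow> bool"
  assumes fin_V: "finite V" and fin_E: "finite E"
    and ends: "\<forall>e\<in>E. ends e \<subseteq> V \<and> card (ends e) \<le> k"
    and b_nonneg: "\<forall>v\<in>V. 0 \<le> b v"
    and d_nonneg: "\<forall>e\<in>E. \<forall>v\<in>ends e. 0 \<le> d v e"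
    and mat: "matroid E indep"
begin

lemma irp_invariant_init: "irp_invariant V E ends k b d indep (V, E, indep, b, {})"
  using b_nonneg matroid_indep_empty[OF mat] matroid_indep_subset[OF mat]
  unfolding irp_invariant_def hdelta_def by auto

lemma irp_invariant_delete:
  assumes inv: "irp_invariant V E ends k b d indep (W, F, ind, b', M)"
  shows "irp_invariant V E ends k b d indep (W, F - {e}, mdel ind e, b', M)"
proof -
  have "ind = (\<lambda>I. I \<subseteq> F \<and> indep (I \<union> M))"
    and settled: "\<forall>v\<in>V - W. \<forall>N\<subseteq>F. relaxed_feasible_at ends d k b v (M \<union> N)"
    using inv unfolding irp_invariant_def by auto
  then have "mdel ind e = (\<lambda>I. I \<subseteq> F - {e} \<and> indep (I \<union> M))"
    unfolding mdel_def by auto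
  moreover have "\<forall>v\<in>V - W. \<forall>N\<subseteq>F - {e}. relaxed_feasible_at ends d k b v (M \<union> N)"
    using settled by blast
  ultimately show ?thesis using inv unfolding irp_invariant_def by auto
qed

lemma irp_invariant_contract:
  assumes inv: "irp_invariant V E ends k b d indep (W, F, ind, b', M)"
    and feas: "lp_feasible ends d W F ind b' x" and "e \<in> F" "x e = 1"
  shows "irp_invariant V E ends k b d indep
    (W, F - {e}, mcontr ind e, \<lambda>v. if v \<in> ends e then b' v - d v e else b' v, insert e M)"
proof -
  have WV: "W \<subseteq> V" and FE: "F \<subseteq> E" and ME: "M \<subseteq> E" and FM: "F \<inter> M = {}"
    and "indep M" and ind: "ind = (\<lambda>I. I \<subseteq> F \<and> indep (I \<union> M))"
    and b': "\<forall>v\<in>W. b' v = b v - (\<Sum>e\<in>hdelta ends M v. d v e) \<and> 0 \<le> b' v"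
    and settled: "\<forall>v\<in>V - W. \<forall>N\<subseteq>F. relaxed_feasible_at ends d k b v (M \<union> N)"
    using inv unfolding irp_invariant_def by auto
  have mat_F: "matroid F ind" unfolding ind using matroid_contract[OF mat \<open>indep M\<close> FM FE] .
  have fin_F: "finite F" and fin_M: "finite M" using FE ME fin_E finite_subset by blast+
  have "ind {e}" using lp_feasible_one_indep[OF mat_F feas \<open>e \<in> F\<close> \<open>x e = 1\<close>] .
  then have "indep (insert e M)" and contr: "mcontr ind e = (\<lambda>I. I \<subseteq> F - {e} \<and> indep (I \<union> insert e M))"
    unfolding mcontr_def ind by auto
  have "d v e \<le> b' v" if "v \<in> W" "v \<in> ends e" for v
    using lp_feasible_one_demand_le[OF feas fin_F _ \<open>e \<in> F\<close> \<open>x e = 1\<close> that] d_nonneg FE by blast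
  moreover have "hdelta ends (insert e M) v =
      (if v \<in> ends e then insert e (hdelta ends M v) else hdelta ends M v)" for v
    unfolding hdelta_def by auto
  moreover have "e \<notin> hdelta ends M v" "finite (hdelta ends M v)" for v
    unfolding hdelta_def using \<open>e \<in> F\<close> FM fin_M by auto
  ultimately have "\<forall>v\<in>W. (if v \<in> ends e then b' v - d v e else b' v) =
      b v - (\<Sum>e'\<in>hdelta ends (insert e M) v. d v e') \<and> 0 \<le> (if v \<in> ends e then b' v - d v e else b' v)"
    using b' by auto
  moreover have "\<forall>v\<in>V - W. \<forall>N\<subseteq>F - {e}. relaxed_feasible_at ends d k b v (insert e M \<union> N)"
    using settled \<open>e \<in> F\<close> by (metis Un_insert_left Un_insert_right insert_Diff insert_mono)
  ultimately show ?thesis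
    unfolding irp_invariant_def using WV FE ME FM \<open>e \<in> F\<close> \<open>indep (insert e M)\<close> contr by auto
qed

lemma relaxed_feasible_if_slack_le:
  assumes inv: "irp_invariant V E ends k b d indep (W, F, ind, b', M)"
    and feas: "lp_feasible ends d W F ind b' x" and x_le_one: "\<forall>e\<in>F. x e \<le> 1"
    and "v \<in> W" and slack: "real (card (hdelta ends F v)) - sum x (hdelta ends F v) \<le> real k"
    and "N \<subseteq> F"
  shows "relaxed_feasible_at ends d k b v (M \<union> N)"
  unfolding relaxed_feasible_at_def
proof (intro allI impI, elim conjE)
  fix L
  assume L: "L \<subseteq> hdelta ends (M \<union> N) v" "card L = min k (card (hdelta ends (M \<union> N) v))"
    and top: "\<forall>e\<in>L. \<forall>e'\<in>hdelta ends (M \<union> N) v - L. d v e' \<le> d v e"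
  have FE: "F \<subseteq> E" and ME: "M \<subseteq> E" and FM: "F \<inter> M = {}"
    and b': "b' v = b v - (\<Sum>e\<in>hdelta ends M v. d v e)"
    using inv \<open>v \<in> W\<close> unfolding irp_invariant_def by auto
  have x_nonneg: "\<forall>e\<in>F. 0 \<le> x e"
    and x_degree: "(\<Sum>e\<in>hdelta ends F v. d v e * x e) \<le> b' v"
    using feas \<open>v \<in> W\<close> unfolding lp_feasible_def by simp_all
  define A where "A = hdelta ends M v"
  define B where "B = hdelta ends N v"
  have AB: "hdelta ends (M \<union> N) v = A \<union> B" unfolding A_def B_def hdelta_def by auto
  have fin_F: "finite F" using FE fin_E finite_subset by blast
  have fin_hF: "finite (hdelta ends F v)" unfolding hdelta_def using fin_F by simp
  have "finite A" "finite B" "A \<inter> B = {}" and BF: "B \<subseteq> hdelta ends F v"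
    using ME \<open>N \<subseteq> F\<close> FM fin_E fin_F unfolding A_def B_def hdelta_def
    by (auto intro: finite_subset)
  moreover have "\<forall>e\<in>A \<union> B. 0 \<le> d v e"
    using d_nonneg ME \<open>N \<subseteq> F\<close> FE unfolding A_def B_def hdelta_def by blast
  moreover have "\<forall>e\<in>B. 0 \<le> x e \<and> x e \<le> 1" using BF x_nonneg x_le_one unfolding hdelta_def by auto
  moreover have "(\<Sum>e\<in>B. 1 - x e) \<le> (\<Sum>e\<in>hdelta ends F v. 1 - x e)"
    using BF fin_hF x_le_one unfolding hdelta_def by (intro sum_mono2) auto
  then have "(\<Sum>e\<in>B. 1 - x e) \<le> real k" using slack by (simp add: sum_subtractf)
  ultimately have "sum (d v) ((A \<union> B) - L) \<le> (\<Sum>e\<in>B. d v e * x e) + sum (d v) A"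
    using L top unfolding AB by (intro sum_diff_top_le) auto
  moreover have "(\<Sum>e\<in>B. d v e * x e) \<le> (\<Sum>e\<in>hdelta ends F v. d v e * x e)"
    using BF fin_hF d_nonneg x_nonneg FE unfolding hdelta_def
    by (intro sum_mono2) (auto intro!: mult_nonneg_nonneg)
  ultimately show "(\<Sum>e\<in>hdelta ends (M \<union> N) v - L. d v e) \<le> b v"
    using x_degree b' unfolding AB A_def by simp
qed

lemma irp_invariant_remove_vertex:
  assumes inv: "irp_invariant V E ends k b d indep (W, F, ind, b', M)"
    and "F \<noteq> {}" and extreme: "lp_extreme ends d W F ind b' x"
    and fractional: "\<forall>e\<in>F. x e \<noteq> 0 \<and> x e \<noteq> 1" and "v \<in> W"
    and v_min: "\<forall>u\<in>W. real (card (hdelta ends F v)) - sum x (hdelta ends F v)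
                     \<le> real (card (hdelta ends F u)) - sum x (hdelta ends F u)"
  shows "irp_invariant V E ends k b d indep (W - {v}, F, ind, b', M)"
proof -
  have WV: "W \<subseteq> V" and FE: "F \<subseteq> E" and "indep M" and FM: "F \<inter> M = {}"
    and ind: "ind = (\<lambda>I. I \<subseteq> F \<and> indep (I \<union> M))"
    using inv unfolding irp_invariant_def by auto
  have mat_F: "matroid F ind" unfolding ind using matroid_contract[OF mat \<open>indep M\<close> FM FE] .
  have feas: "lp_feasible ends d W F ind b' x" using extreme unfolding lp_extreme_def by blast
  have x_le_one: "\<forall>e\<in>F. x e \<le> 1" using lp_feasible_le_one[OF mat_F feas] by blast
  have "finite W" using WV fin_V finite_subset by blast
  moreover have "\<forall>e\<in>F. finite (ends e) \<and> card (ends e) \<le> k"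
    using ends FE fin_V finite_subset by blast
  ultimately obtain u where "u \<in> W"
    "real (card (hdelta ends F u)) - sum x (hdelta ends F u) \<le> real k"
    using extreme_point_has_low_slack_vertex[OF mat_F _ \<open>F \<noteq> {}\<close> extreme fractional] by blast
  then have "relaxed_feasible_at ends d k b v (M \<union> N)" if "N \<subseteq> F" for N
    using relaxed_feasible_if_slack_le[OF inv feas x_le_one \<open>v \<in> W\<close> _ that] v_min by force
  then show ?thesis using inv unfolding irp_invariant_def by auto
qed

lemma irp_invariant_step:
  assumes inv: "irp_invariant V E ends k b d indep s" and step: "irp_step ends d p s s'"
  shows "irp_invariant V E ends k b d indep s'"
proof -
  obtain W F ind b' M where s: "s = (W, F, ind, b', M)" by (cases s) auto
  obtain x where "lp_opt_extreme ends d p W F ind b' x" and "F \<noteq> {}" and cases: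
    "(\<exists>e\<in>F. x e = 0 \<and> s' = (W, F - {e}, mdel ind e, b', M))
     \<or> ((\<forall>e\<in>F. x e \<noteq> 0) \<and>
        (\<exists>e\<in>F. x e = 1 \<and> s' = (W, F - {e}, mcontr ind e,
           (\<lambda>v. if v \<in> ends e then b' v - d v e else b' v), insert e M)))
     \<or> ((\<forall>e\<in>F. x e \<noteq> 0 \<and> x e \<noteq> 1) \<and>
        (\<exists>v\<in>W. (\<forall>u\<in>W. real (card (hdelta ends F v)) - sum x (hdelta ends F v)
                          \<le> real (card (hdelta ends F u)) - sum x (hdelta ends F u)) \<and>
                s' = (W - {v}, F, ind, b', M)))"
    using step unfolding s irp_step_def by auto
  then have extreme: "lp_extreme ends d W F ind b' x" unfolding lp_opt_extreme_def by blast
  then have feas: "lp_feasible ends d W F ind b' x" unfolding lp_extreme_def by blast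
  from cases show ?thesis
    using irp_invariant_delete[OF inv[unfolded s]]
      irp_invariant_contract[OF inv[unfolded s] feas]
      irp_invariant_remove_vertex[OF inv[unfolded s] \<open>F \<noteq> {}\<close> extreme]
    by blast
qed

lemma irp_invariant_final:
  assumes "irp_invariant V E ends k b d indep (W, {}, ind, b', M)"
  shows "indep M \<and> (\<forall>v\<in>V. relaxed_feasible_at ends d k b v M)"
proof -
  have ME: "M \<subseteq> E" and "indep M"
    and b': "\<forall>v\<in>W. b' v = b v - (\<Sum>e\<in>hdelta ends M v. d v e) \<and> 0 \<le> b' v"
    and settled: "\<forall>v\<in>V - W. relaxed_feasible_at ends d k b v M"
    using assms unfolding irp_invariant_def by auto
  have "relaxed_feasible_at ends d k b v M" if "v \<in> W" for v
    unfolding relaxed_feasible_at_def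
  proof (intro allI impI)
    fix L
    have "finite M" using ME fin_E by (rule finite_subset)
    then have "finite (hdelta ends M v)" unfolding hdelta_def by simp
    then have "(\<Sum>e\<in>hdelta ends M v - L. d v e) \<le> (\<Sum>e\<in>hdelta ends M v. d v e)"
      using d_nonneg ME unfolding hdelta_def by (intro sum_mono2) auto
    then show "(\<Sum>e\<in>hdelta ends M v - L. d v e) \<le> b v" using b' that by force
  qed
  then show ?thesis using \<open>indep M\<close> settled by blast
qed

end

theorem lemma3:
  fixes V :: "'v set" and E :: "'e set" and ends :: "'e \<Rightarrow> 'v set" and k :: nat
    and b :: "'v \<Rightarrow> real" and d :: "'v \<Rightarrow> 'e \<Rightarrow> real" and p :: "'e \<Rightarrow> real"
    and indep :: "'e set \<Rightarrow> bool"
    and W :: "'v set" and indep' :: "'e set \<Rightarrow> bool" and b' :: "'v \<Rightarrow> real" and M' :: "'e set"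
  assumes "finite V" and "finite E"
    and "\<forall>e\<in>E. ends e \<subseteq> V \<and> card (ends e) \<le> k"
    and "\<forall>v\<in>V. 0 \<le> b v"
    and "\<forall>e\<in>E. \<forall>v\<in>ends e. 0 \<le> d v e"
    and "\<forall>e\<in>E. 0 \<le> p e"
    and "matroid E indep"
    and "(irp_step ends d p)\<^sup>*\<^sup>* (V, E, indep, b, {}) (W, {}, indep', b', M')"
  shows "indep M' \<and>
    (\<forall>v\<in>V. \<forall>L. L \<subseteq> hdelta ends M' v \<and> card L = min k (card (hdelta ends M' v)) \<and>
                (\<forall>e\<in>L. \<forall>e'\<in>hdelta ends M' v - L. d v e' \<le> d v e)
             \<longrightarrow> (\<Sum>e\<in>hdelta ends M' v - L. d v e) \<le> b v)"
proof -
  have "irp_invariant V E ends k b d indep s"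
    if "(irp_step ends d p)\<^sup>*\<^sup>* (V, E, indep, b, {}) s" for s
    using that
  proof (induction rule: rtranclp_induct)
    case base
    show ?case using irp_invariant_init[OF assms(1-5,7)] .
  next
    case (step s s')
    then show ?case using irp_invariant_step[OF assms(1-5,7)] by blast
  qed
  from this[OF assms(8)] show ?thesis
    using irp_invariant_final[OF assms(1-5,7)] unfolding relaxed_feasible_at_def by blast
qed

end
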